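(* Let $f\in L^{N,\infty}(\Omega)$ be non-negative, let $h\colon[0,\infty)\to(0,\infty]$ be continuous with $h(s)>0$ for all $s\ge0$, and let $g\colon\Omega\times[0,\infty)\to[0,\infty)$ be a Carathéodory function. Assume there exist a ball $B$ with $\overline{B}\subset\Omega$, a constant $c>0$ and a function $\kappa\colon[0,\infty)\to[0,\infty)$ with $\lim_{s\to\infty}\kappa(s)=\infty$ such that $f(x)\ge c$ for a.e. $x\in B$ and $g(x,s)\ge\kappa(s)$ for a.e. $x\in B$ and all $s\ge0$. Then there exists $\tilde\lambda>0$ such that for every $\lambda\ge\tilde\lambda$ the problem $$-\Delta_1 u=\lambda h(u)f(x)+g(x,u)\ \text{in }\Omega,\qquad u=0\ \text{on }\partial\Omega$$ has no solution.
   Context: $\Omega\subset\mathbb{R}^N$ ($N\ge 2$) is a bounded open set with Lipschitz boundary, $\nu$ its outward unit normal. $\mathcal{DM}^\infty(\Omega)=\{z\in L^\infty(\Omega)^N:\operatorname{div} z \text{ is a Radon measure with finite total variation in }\Omega\}$. For $z\in\mathcal{DM}^\infty(\Omega)$ and $u\in BV(\Omega)\cap L^\infty(\Omega)$, the pairing $(z,Du)$ is the Radon measure defined by $\langle (z,Du),\varphi\rangle=-\int_\Omega u^*\varphi\operatorname{div}z-\int_\Omega u\,z\cdot\nabla\varphi$ for $\varphi\in C^1_c(\Omega)$, where $u^*$ is the precise representative of $u$. $[z,\nu]\in L^\infty(\partial\Omega)$ denotes Anzellotti's weak trace of the normal component of $z$ on $\partial\Omega$. A solution of $-\Delta_1 u=\lambda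 h(u)f+g(x,u)$ in $\Omega$, $u=0$ on $\partial\Omega$, is a non-negative $u\in BV(\Omega)\cap L^\infty(\Omega)$ with $h(u)f,\ g(x,u)\in L^1_{\rm loc}(\Omega)$ for which there exists $z\in\mathcal{DM}^\infty(\Omega)$ with $\|z\|_{L^\infty(\Omega)^N}\le1$ such that $-\operatorname{div}z=\lambda h(u)f+g(x,u)$ in $\mathcal{D}'(\Omega)$, $(z,Du)=|Du|$ as measures in $\Omega$, and $u+u[z,\nu]=0$ $\mathcal{H}^{N-1}$-a.e. on $\partial\Omega$. *)

theory Defs
  imports "HOL-Analysis.Analysis"
begin

definition omega_h :: "real \<Rightarrow> real" where
  "omega_h s = pi powr (s / 2) / Gamma (s / 2 + 1)"

definition hausdorff_approx :: "real \<Rightarrow> real \<Rightarrow> 'a::metric_space set \<Rightarrow> ennreal" where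
  "hausdorff_approx s \<delta> A =
     (INF C \<in> {C :: nat \<Rightarrow> 'a set. A \<subseteq> (\<Union>i. C i) \<and> (\<forall>i. bounded (C i) \<and> diameter (C i) \<le> \<delta>)}.
        (\<Sum>i. ennreal (omega_h s * (diameter (C i) / 2) powr s)))"

definition hausdorff_outer :: "real \<Rightarrow> 'a::metric_space set \<Rightarrow> ennreal" where
  "hausdorff_outer s A = (SUP \<delta> \<in> {0<..}. hausdorff_approx s \<delta> A)"

text \<open>H^s restricted to the Borel subsets of S (countably additive there).\<close>
definition hausdorff_measure :: "real \<Rightarrow> 'a::metric_space set \<Rightarrow> 'a measure" where
  "hausdorff_measure s S = measure_of S (sets (restrict_space borel S)) (hausdorff_outer s)"

abbreviation bdry_measure :: "'a::euclidean_space set \<Rightarrow> 'a measure" where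
  "bdry_measure \<Omega> \<equiv> hausdorff_measure (real DIM('a) - 1) (frontier \<Omega>)"

definition C1c_scalar :: "'a::euclidean_space set \<Rightarrow> ('a \<Rightarrow> real) \<Rightarrow> ('a \<Rightarrow> 'a) \<Rightarrow> bool" where
  "C1c_scalar U \<phi> d\<phi> \<longleftrightarrow>
     (\<forall>x. (\<phi> has_derivative (\<lambda>v. d\<phi> x \<bullet> v)) (at x)) \<and> continuous_on UNIV d\<phi> \<and>
     compact (closure {x. \<phi> x \<noteq> 0}) \<and> closure {x. \<phi> x \<noteq> 0} \<subseteq> U"

definition C1c_vector :: "'a::euclidean_space set \<Rightarrow> ('a \<Rightarrow> 'a) \<Rightarrow> ('a \<Rightarrow> 'a \<Rightarrow> 'a) \<Rightarrow> bool" where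
  "C1c_vector U \<phi> d\<phi> \<longleftrightarrow>
     (\<forall>x. (\<phi> has_derivative d\<phi> x) (at x)) \<and> (\<forall>v. continuous_on UNIV (\<lambda>x. d\<phi> x v)) \<and>
     compact (closure {x. \<phi> x \<noteq> 0}) \<and> closure {x. \<phi> x \<noteq> 0} \<subseteq> U"

definition vdiv :: "('a::euclidean_space \<Rightarrow> 'a \<Rightarrow> 'a) \<Rightarrow> 'a \<Rightarrow> real" where
  "vdiv d\<phi> x = (\<Sum>b\<in>Basis. d\<phi> x b \<bullet> b)"

definition lipschitz_boundary :: "'a::euclidean_space set \<Rightarrow> bool" where
  "lipschitz_boundary \<Omega> \<longleftrightarrow>
     (\<forall>x\<in>frontier \<Omega>. \<exists>r>0. \<exists>e. norm e = 1 \<and>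
        (\<exists>\<phi> L. L-lipschitz_on UNIV \<phi> \<and> (\<forall>y t. \<phi> (y + t *\<^sub>R e) = \<phi> y) \<and>
               \<Omega> \<inter> ball x r = {y \<in> ball x r. y \<bullet> e < \<phi> y}))"

text \<open>Measure-theoretic outward unit normal (Gauss--Green formula).\<close>
definition outward_normal :: "'a::euclidean_space set \<Rightarrow> ('a \<Rightarrow> 'a) \<Rightarrow> bool" where
  "outward_normal \<Omega> \<nu> \<longleftrightarrow>
     \<nu> \<in> borel_measurable (bdry_measure \<Omega>) \<and> (AE x in bdry_measure \<Omega>. norm (\<nu> x) = 1) \<and>
     (\<forall>\<phi> d\<phi>. C1c_vector UNIV \<phi> d\<phi> \<longrightarrow>
        (\<integral>x. vdiv d\<phi> x \<partial>lebesgue_on \<Omega>) = (\<integral>x. \<phi> x \<bullet> \<nu> x \<partial>bdry_measure \<Omega>))"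

definition finite_borel_on :: "'a::topological_space set \<Rightarrow> 'a measure \<Rightarrow> bool" where
  "finite_borel_on U \<mu> \<longleftrightarrow> finite_measure \<mu> \<and> sets \<mu> = sets (restrict_space borel U)"

text \<open>u \<in> BV(\<Omega>) with Du = \<sigma> |Du|, |Du| = \<mu> (polar decomposition).\<close>
definition BV_polar :: "'a::euclidean_space set \<Rightarrow> ('a \<Rightarrow> real) \<Rightarrow> 'a measure \<Rightarrow> ('a \<Rightarrow> 'a) \<Rightarrow> bool" where
  "BV_polar \<Omega> u \<mu> \<sigma> \<longleftrightarrow>
     integrable (lebesgue_on \<Omega>) u \<and> finite_borel_on \<Omega> \<mu> \<and> \<sigma> \<in> borel_measurable \<mu> \<and>
     (AE x in \<mu>. norm (\<sigma> x) = 1) \<and>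
     (\<forall>\<phi> d\<phi>. C1c_vector \<Omega> \<phi> d\<phi> \<longrightarrow>
        (\<integral>x. u x * vdiv d\<phi> x \<partial>lebesgue_on \<Omega>) = - (\<integral>x. \<phi> x \<bullet> \<sigma> x \<partial>\<mu>))"

text \<open>div z = \<theta> \<mu> is a Radon measure with finite total variation \<mu> = |div z| in \<Omega>.\<close>
definition div_polar :: "'a::euclidean_space set \<Rightarrow> ('a \<Rightarrow> 'a) \<Rightarrow> 'a measure \<Rightarrow> ('a \<Rightarrow> real) \<Rightarrow> bool" where
  "div_polar \<Omega> z \<mu> \<theta> \<longleftrightarrow>
     finite_borel_on \<Omega> \<mu> \<and> \<theta> \<in> borel_measurable \<mu> \<and> (AE x in \<mu>. \<bar>\<theta> x\<bar> = 1) \<and>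
     (\<forall>\<phi> d\<phi>. C1c_scalar \<Omega> \<phi> d\<phi> \<longrightarrow>
        (\<integral>x. \<phi> x * \<theta> x \<partial>\<mu>) = - (\<integral>x. z x \<bullet> d\<phi> x \<partial>lebesgue_on \<Omega>))"

definition linf_on :: "'a::euclidean_space set \<Rightarrow> ('a \<Rightarrow> real) \<Rightarrow> bool" where
  "linf_on \<Omega> u \<longleftrightarrow> u \<in> borel_measurable (lebesgue_on \<Omega>) \<and> (\<exists>M. AE x in lebesgue_on \<Omega>. \<bar>u x\<bar> \<le> M)"

definition L1_loc :: "'a::euclidean_space set \<Rightarrow> ('a \<Rightarrow> real) \<Rightarrow> bool" where
  "L1_loc \<Omega> F \<longleftrightarrow> F \<in> borel_measurable (lebesgue_on \<Omega>) \<and>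
     (\<forall>K. compact K \<and> K \<subseteq> \<Omega> \<longrightarrow> integrable (lebesgue_on K) F)"

text \<open>Marcinkiewicz space L^{N,\<infinity>}(\<Omega>), N = DIM('a).\<close>
definition weak_LN :: "'a::euclidean_space set \<Rightarrow> ('a \<Rightarrow> real) \<Rightarrow> bool" where
  "weak_LN \<Omega> f \<longleftrightarrow> f \<in> borel_measurable (lebesgue_on \<Omega>) \<and>
     (\<exists>C. \<forall>t>0. t * (measure (lebesgue_on \<Omega>) {x\<in>\<Omega>. \<bar>f x\<bar> > t}) powr (1 / real DIM('a)) \<le> C)"

definition caratheodory :: "'a::euclidean_space set \<Rightarrow> ('a \<Rightarrow> real \<Rightarrow> real) \<Rightarrow> bool" where
  "caratheodory \<Omega> g \<longleftrightarrow> (\<forall>s\<ge>0. (\<lambda>x. g x s) \<in> borel_measurable (lebesgue_on \<Omega>)) \<and>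
     (AE x in lebesgue_on \<Omega>. continuous_on {0..} (g x))"

text \<open>Precise representative: limit of ball averages where it exists, 0 otherwise.\<close>
definition precise_rep :: "('a::euclidean_space \<Rightarrow> real) \<Rightarrow> 'a \<Rightarrow> real" where
  "precise_rep u x =
     (let avg = (\<lambda>r. (\<integral>y. u y \<partial>lebesgue_on (ball x r)) / measure lebesgue (ball x r)) in
      if (\<exists>L. (avg \<longlongrightarrow> L) (at_right 0)) then Lim (at_right 0) avg else 0)"

text \<open>BV trace Tu of u on \<partial>\<Omega> (Gauss--Green formula).\<close>
definition bv_trace :: "'a::euclidean_space set \<Rightarrow> ('a \<Rightarrow> 'a) \<Rightarrow> ('a \<Rightarrow> real) \<Rightarrow> 'a measure \<Rightarrow> ('a \<Rightarrow> 'a) \<Rightarrow> ('a \<Rightarrow> real) \<Rightarrow> bool" where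
  "bv_trace \<Omega> \<nu> u \<mu> \<sigma> Tu \<longleftrightarrow> integrable (bdry_measure \<Omega>) Tu \<and>
     (\<forall>\<phi> d\<phi>. C1c_vector UNIV \<phi> d\<phi> \<longrightarrow>
        (\<integral>x. u x * vdiv d\<phi> x \<partial>lebesgue_on \<Omega>) =
          - (\<integral>x. \<phi> x \<bullet> \<sigma> x \<partial>\<mu>) + (\<integral>x. (\<phi> x \<bullet> \<nu> x) * Tu x \<partial>bdry_measure \<Omega>))"

text \<open>Anzellotti's weak trace [z,\<nu>] \<in> L^\<infinity>(\<partial>\<Omega>) of the normal component of z.\<close>
definition weak_normal_trace :: "'a::euclidean_space set \<Rightarrow> ('a \<Rightarrow> 'a) \<Rightarrow> 'a measure \<Rightarrow> ('a \<Rightarrow> real) \<Rightarrow> ('a \<Rightarrow> real) \<Rightarrow> bool" where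
  "weak_normal_trace \<Omega> z \<mu> \<theta> \<beta> \<longleftrightarrow>
     \<beta> \<in> borel_measurable (bdry_measure \<Omega>) \<and> (\<exists>M. AE x in bdry_measure \<Omega>. \<bar>\<beta> x\<bar> \<le> M) \<and>
     (\<forall>\<phi> d\<phi>. C1c_scalar UNIV \<phi> d\<phi> \<longrightarrow>
        (\<integral>x. \<phi> x * \<theta> x \<partial>\<mu>) + (\<integral>x. z x \<bullet> d\<phi> x \<partial>lebesgue_on \<Omega>) =
          (\<integral>x. \<beta> x * \<phi> x \<partial>bdry_measure \<Omega>))"

definition is_solution ::
  "'a::euclidean_space set \<Rightarrow> ('a \<Rightarrow> 'a) \<Rightarrow> real \<Rightarrow> (real \<Rightarrow> ereal) \<Rightarrow> ('a \<Rightarrow> real)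
     \<Rightarrow> ('a \<Rightarrow> real \<Rightarrow> real) \<Rightarrow> ('a \<Rightarrow> real) \<Rightarrow> bool" where
  "is_solution \<Omega> \<nu> lam h f g u \<longleftrightarrow>
     linf_on \<Omega> u \<and> (AE x in lebesgue_on \<Omega>. u x \<ge> 0) \<and>
     (AE x in lebesgue_on \<Omega>. \<bar>h (u x) * ereal (f x)\<bar> \<noteq> \<infinity>) \<and>
     L1_loc \<Omega> (\<lambda>x. real_of_ereal (h (u x) * ereal (f x))) \<and>
     L1_loc \<Omega> (\<lambda>x. g x (u x)) \<and>
     (\<exists>\<mu>u \<sigma> z \<mu>z \<theta> Tu \<beta>.
        BV_polar \<Omega> u \<mu>u \<sigma> \<and>
        z \<in> borel_measurable (lebesgue_on \<Omega>) \<and> (AE x in lebesgue_on \<Omega>. norm (z x) \<le> 1) \<and>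
        div_polar \<Omega> z \<mu>z \<theta> \<and>
        (\<forall>\<phi> d\<phi>. C1c_scalar \<Omega> \<phi> d\<phi> \<longrightarrow>
           (\<integral>x. z x \<bullet> d\<phi> x \<partial>lebesgue_on \<Omega>) =
             (\<integral>x. (lam * real_of_ereal (h (u x) * ereal (f x)) + g x (u x)) * \<phi> x \<partial>lebesgue_on \<Omega>)) \<and>
        (\<forall>\<phi> d\<phi>. C1c_scalar \<Omega> \<phi> d\<phi> \<longrightarrow>
           - (\<integral>x. precise_rep u x * \<phi> x * \<theta> x \<partial>\<mu>z) - (\<integral>x. u x * (z x \<bullet> d\<phi> x) \<partial>lebesgue_on \<Omega>) =
             (\<integral>x. \<phi> x \<partial>\<mu>u)) \<and>
        bv_trace \<Omega> \<nu> u \<mu>u \<sigma> Tu \<and> weak_normal_trace \<Omega> z \<mu>z \<theta> \<beta> \<and>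
        (AE x in bdry_measure \<Omega>. Tu x + Tu x * \<beta> x = 0))"

end

theory Submission
  imports Defs
begin

text \<open>Test the equation with a nonnegative \<open>C\<^sup>1\<close> bump \<open>\<phi>\<close> supported in the ball. Since
  \<open>|z| \<le> 1\<close>, the left-hand side \<open>\<integral> z \<cdot> \<nabla>\<phi>\<close> is at most \<open>\<parallel>\<nabla>\<phi>\<parallel>\<^sub>\<infinity> |\<Omega>|\<close>, whatever
  \<open>\<lambda>\<close> and \<open>u\<close> are. On the ball the reaction term is large for large \<open>\<lambda>\<close>, uniformly in \<open>u\<close>:
  where \<open>u \<ge> s\<^sub>0\<close> already \<open>g(x,u) \<ge> \<kappa>(u) \<ge> K\<close>, and on \<open>[0,s\<^sub>0]\<close> the continuous positive \<open>h\<close>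
  is bounded below by some \<open>m > 0\<close>, so \<open>\<lambda> h(u) f \<ge> \<lambda> m c \<ge> K\<close>. Choosing
  \<open>K \<integral>\<phi> > \<parallel>\<nabla>\<phi>\<parallel>\<^sub>\<infinity> |\<Omega>|\<close> gives a contradiction.\<close>

lemma has_real_derivative_max_0_square:
  "((\<lambda>t::real. (max 0 t)\<^sup>2) has_real_derivative 2 * max 0 t) (at t)"
proof (cases t "0::real" rule: linorder_cases)
  case less
  have "((\<lambda>t::real. 0) has_real_derivative 2 * max 0 t) (at t)" using less by simp
  then show ?thesis
    by (rule has_field_derivative_transform_within_open[of _ _ _ "{..<0}"]) (use less in auto)
next
  case equal
  have "((\<lambda>s::real. max 0 s) \<longlongrightarrow> 0) (at 0)"
    using tendsto_max[OF tendsto_const tendsto_ident_at, of 0 0 UNIV] by simp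
  moreover have "\<forall>\<^sub>F s in at (0::real). max 0 s = ((max 0 (0 + s))\<^sup>2 - (max 0 0)\<^sup>2) / s"
    by (auto simp: eventually_at_filter power2_eq_square max_def)
  ultimately show ?thesis
    using equal by (simp add: DERIV_def Lim_transform_eventually)
next
  case greater
  have "((\<lambda>t::real. t\<^sup>2) has_real_derivative 2 * max 0 t) (at t)"
    using greater by (auto intro!: derivative_eq_intros)
  then show ?thesis
    by (rule has_field_derivative_transform_within_open[of _ _ _ "{0<..}"]) (use greater in auto)
qed

text \<open>Squaring the positive part makes the bump \<open>C\<^sup>1\<close>.\<close>

definition bump :: "'a::real_inner \<Rightarrow> real \<Rightarrow> 'a \<Rightarrow> real" where
  "bump x0 r x = (max 0 (r\<^sup>2 - (norm (x - x0))\<^sup>2))\<^sup>2"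

definition bump_grad :: "'a::real_inner \<Rightarrow> real \<Rightarrow> 'a \<Rightarrow> 'a" where
  "bump_grad x0 r x = (-4 * max 0 (r\<^sup>2 - (norm (x - x0))\<^sup>2)) *\<^sub>R (x - x0)"

lemma has_derivative_bump:
  "(bump x0 r has_derivative (\<lambda>v. bump_grad x0 r x \<bullet> v)) (at x)"
proof -
  let ?q = "r\<^sup>2 - (norm (x - x0))\<^sup>2"
  have "((\<lambda>x. r\<^sup>2 - (x - x0) \<bullet> (x - x0)) has_derivative (\<lambda>v. - (v \<bullet> (x - x0) + (x - x0) \<bullet> v))) (at x)"
    by (auto intro!: derivative_eq_intros)
  then have "((\<lambda>x. r\<^sup>2 - (norm (x - x0))\<^sup>2) has_derivative (\<lambda>v. -2 * ((x - x0) \<bullet> v))) (at x)"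
    by (simp add: power2_norm_eq_inner inner_commute)
  from has_derivative_compose[OF this has_real_derivative_max_0_square[unfolded has_field_derivative_def]]
  have "((\<lambda>x. (max 0 (r\<^sup>2 - (norm (x - x0))\<^sup>2))\<^sup>2) has_derivative
      (\<lambda>v. 2 * max 0 ?q * (-2 * ((x - x0) \<bullet> v)))) (at x)"
    by (simp add: o_def)
  then show ?thesis
    by (simp add: bump_def[abs_def] bump_grad_def algebra_simps)
qed

lemma bump_nonneg: "0 \<le> bump x0 r x"
  by (simp add: bump_def)

lemma bump_pos_iff:
  assumes "0 \<le> r"
  shows "0 < bump x0 r x \<longleftrightarrow> x \<in> ball x0 r"
proof -
  have "0 < r\<^sup>2 - (norm (x - x0))\<^sup>2 \<longleftrightarrow> norm (x - x0) < r"
    using power_mono_iff[of "norm (x - x0)" r 2] assms by (simp add: not_le[symmetric])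
  then show ?thesis
    by (auto simp: bump_def dist_norm norm_minus_commute max_def)
qed

lemma bump_eq_0_iff:
  assumes "0 \<le> r"
  shows "bump x0 r x = 0 \<longleftrightarrow> x \<notin> ball x0 r"
  using bump_pos_iff[OF assms, of x0 x] bump_nonneg[of x0 r x] by (auto simp: less_le)

lemma bump_le: "0 \<le> r \<Longrightarrow> bump x0 r x \<le> r ^ 4"
  unfolding bump_def by (rule order_trans[OF power_mono[of _ "r\<^sup>2"]]) auto

lemma norm_bump_grad_le:
  assumes "0 \<le> r"
  shows "norm (bump_grad x0 r x) \<le> 4 * r ^ 3"
proof (cases "norm (x - x0) < r")
  case True
  have "norm (bump_grad x0 r x) = 4 * max 0 (r\<^sup>2 - (norm (x - x0))\<^sup>2) * norm (x - x0)"
    by (simp add: bump_grad_def)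
  also have "\<dots> \<le> 4 * r\<^sup>2 * r"
    using True by (intro mult_mono) auto
  finally show ?thesis
    by (simp add: power2_eq_square power3_eq_cube)
next
  case False
  then have "r\<^sup>2 \<le> (norm (x - x0))\<^sup>2"
    using assms by (intro power_mono) auto
  then show ?thesis
    using assms by (simp add: bump_grad_def)
qed

lemma C1c_scalar_bump:
  assumes "0 < r" and "cball x0 r \<subseteq> U"
  shows "C1c_scalar U (bump x0 r) (bump_grad x0 r)"
proof -
  have "{x. bump x0 r x \<noteq> 0} = ball x0 r"
    using assms(1) by (auto simp: bump_eq_0_iff)
  moreover have "continuous_on UNIV (bump_grad x0 r)"
    unfolding bump_grad_def by (intro continuous_intros)
  ultimately show ?thesis
    using assms has_derivative_bump unfolding C1c_scalar_def by auto
qed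

lemma integrable_bump:
  assumes "S \<in> lmeasurable" and "0 \<le> r"
  shows "integrable (lebesgue_on S) (bump x0 r)"
proof (rule finite_measure.integrable_const_bound[where B = "r ^ 4"])
  show "finite_measure (lebesgue_on S)"
    using assms(1) by (rule finite_measure_lebesgue_on)
  show "AE x in lebesgue_on S. norm (bump x0 r x) \<le> r ^ 4"
    using assms(2) by (simp add: bump_nonneg bump_le)
  have "continuous_on S (bump x0 r)"
    unfolding bump_def by (intro continuous_intros)
  then show "bump x0 r \<in> borel_measurable (lebesgue_on S)"
    using assms(1) by (intro continuous_imp_measurable_on_sets_lebesgue) auto
qed

lemma integral_bump_pos:
  assumes "S \<in> lmeasurable" and "0 < r" and "ball x0 r \<subseteq> S"
  shows "0 < (\<integral>x. bump x0 r x \<partial>lebesgue_on S)"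
proof -
  have S: "S \<in> sets lebesgue"
    using assms(1) by (rule fmeasurableD)
  have "(\<integral>x. bump x0 r x \<partial>lebesgue_on S) \<noteq> 0"
  proof
    assume "(\<integral>x. bump x0 r x \<partial>lebesgue_on S) = 0"
    then have "AE x in lebesgue_on S. bump x0 r x = 0"
      using integrable_bump[OF assms(1)] assms(2)
      by (subst integral_nonneg_eq_0_iff_AE[symmetric]) (auto simp: bump_nonneg)
    then have "AE x in lebesgue. x \<in> S \<longrightarrow> bump x0 r x = 0"
      using S by (simp add: AE_restrict_space_iff)
    then have "AE x in lebesgue. x \<notin> ball x0 r"
      by (rule eventually_mono) (use assms(2,3) bump_eq_0_iff[of r x0] in auto)
    then have "ball x0 r \<in> null_sets lebesgue"
      by (simp add: AE_iff_null_sets)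
    moreover have "\<not> negligible (ball x0 r)"
      using assms(2) by (intro open_not_negligible) auto
    ultimately show False
      by (simp add: negligible_iff_null_sets)
  qed
  moreover have "0 \<le> (\<integral>x. bump x0 r x \<partial>lebesgue_on S)"
    by (intro integral_nonneg_AE AE_I2 bump_nonneg)
  ultimately show ?thesis
    by linarith
qed

lemma integrable_lebesgue_on_zero_extension:
  fixes f :: "'a::euclidean_space \<Rightarrow> real"
  assumes "integrable (lebesgue_on A) f" and "A \<in> sets lebesgue" and "B \<in> sets lebesgue"
    and "A \<subseteq> B" and "\<And>x. x \<in> B - A \<Longrightarrow> f x = 0"
  shows "integrable (lebesgue_on B) f"
proof -
  have "(\<lambda>x. indicator B x *\<^sub>R f x) = (\<lambda>x. indicator A x *\<^sub>R f x)"
  proof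
    fix x show "indicator B x *\<^sub>R f x = indicator A x *\<^sub>R f x"
      using assms(4) assms(5)[of x] by (cases "x \<in> A"; cases "x \<in> B") auto
  qed
  then show ?thesis
    using assms(1-3) by (simp add: integrable_restrict_space)
qed

lemma L1_loc_mult_bump_integrable:
  assumes "L1_loc S F" and "S \<in> sets lebesgue" and "0 \<le> r" and "cball x0 r \<subseteq> S"
  shows "integrable (lebesgue_on S) (\<lambda>x. F x * bump x0 r x)"
proof (rule integrable_lebesgue_on_zero_extension[OF _ _ assms(2,4)])
  have F: "integrable (lebesgue_on (cball x0 r)) F"
    using assms(1,4) by (simp add: L1_loc_def)
  show "integrable (lebesgue_on (cball x0 r)) (\<lambda>x. F x * bump x0 r x)"
  proof (rule Bochner_Integration.integrable_bound)
    show "integrable (lebesgue_on (cball x0 r)) (\<lambda>x. \<bar>F x\<bar> * r ^ 4)"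
      using F by (intro integrable_mult_left integrable_abs)
    show "(\<lambda>x. F x * bump x0 r x) \<in> borel_measurable (lebesgue_on (cball x0 r))"
      using borel_measurable_integrable[OF F]
        borel_measurable_integrable[OF integrable_bump[OF lmeasurable_cball assms(3)]]
      by (rule borel_measurable_times)
    show "AE x in lebesgue_on (cball x0 r). norm (F x * bump x0 r x) \<le> norm (\<bar>F x\<bar> * r ^ 4)"
    proof (rule AE_I2)
      fix x
      have "norm (F x * bump x0 r x) = \<bar>F x\<bar> * bump x0 r x"
        by (simp add: abs_mult bump_nonneg)
      also have "\<dots> \<le> \<bar>F x\<bar> * r ^ 4"
        using assms(3) by (intro mult_left_mono bump_le) auto
      also have "\<dots> = norm (\<bar>F x\<bar> * r ^ 4)"
        using assms(3) by (simp add: abs_mult)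
      finally show "norm (F x * bump x0 r x) \<le> norm (\<bar>F x\<bar> * r ^ 4)" .
    qed
  qed
  show "x \<in> S - cball x0 r \<Longrightarrow> F x * bump x0 r x = 0" for x
    using bump_eq_0_iff[OF assms(3), of x0 x] by simp
qed simp

lemma integral_inner_le_measure:
  assumes "finite_measure M" and "AE x in M. norm (z x) \<le> 1" and "\<And>x. norm (d x) \<le> B"
  shows "(\<integral>x. z x \<bullet> d x \<partial>M) \<le> B * measure M (space M)"
proof -
  have "0 \<le> B"
    using assms(3) norm_ge_zero order_trans by blast
  have "(\<integral>x. z x \<bullet> d x \<partial>M) \<le> (\<integral>x. B \<partial>M)"
  proof (rule integral_mono_AE')
    show "integrable M (\<lambda>x. B)"
      using assms(1) by (rule finite_measure.integrable_const)
    show "AE x in M. z x \<bullet> d x \<le> B"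
      using assms(2)
    proof (rule eventually_mono)
      fix x assume "norm (z x) \<le> 1"
      then have "norm (z x) * norm (d x) \<le> 1 * B"
        using assms(3) by (intro mult_mono) auto
      then show "z x \<bullet> d x \<le> B"
        using norm_cauchy_schwarz[of "z x" "d x"] by simp
    qed
  qed (use \<open>0 \<le> B\<close> in simp)
  then show ?thesis
    by (simp add: mult.commute)
qed

lemma AE_lebesgue_on_subset:
  assumes "AE x in lebesgue_on A. P x" and "A \<in> sets lebesgue" and "B \<in> sets lebesgue"
  shows "AE x in lebesgue_on B. x \<in> A \<longrightarrow> P x"
proof -
  have "AE x in lebesgue. x \<in> A \<longrightarrow> P x"
    using assms(1,2) by (simp add: AE_restrict_space_iff)
  then have "AE x in lebesgue. x \<in> B \<longrightarrow> x \<in> A \<longrightarrow> P x"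
    by (rule eventually_mono) simp
  then show ?thesis
    using assms(3) by (simp add: AE_restrict_space_iff)
qed

lemma compact_continuous_pos_ereal_lower_bound:
  fixes h :: "real \<Rightarrow> ereal"
  assumes "compact K" and "continuous_on K h" and "\<forall>s\<in>K. 0 < h s"
  obtains m where "0 < m" and "\<forall>s\<in>K. ereal m \<le> h s"
proof (cases "K = {}")
  case False
  then obtain s1 where "s1 \<in> K" and s1: "\<forall>s\<in>K. h s1 \<le> h s"
    using continuous_attains_inf[OF assms(1) _ assms(2)] by blast
  then obtain m where "0 < ereal m" and "ereal m < h s1"
    using assms(3) ereal_dense2 by blast
  then show ?thesis
    using that s1 by (fastforce intro: less_imp_le order_trans)
qed (use that[of 1] in auto)

text \<open>The finiteness hypothesis matters: \<open>real_of_ereal \<infinity> = 0\<close>.\<close>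

lemma real_of_ereal_mult_lower_bound:
  assumes "ereal m \<le> H" and "0 \<le> m" and "0 \<le> c" and "c \<le> a" and "\<bar>H * ereal a\<bar> \<noteq> \<infinity>"
  shows "m * c \<le> real_of_ereal (H * ereal a)"
proof (cases "a = 0")
  case False
  with assms(3,4) have "0 < a" by simp
  then obtain t where t: "H = ereal t"
    using assms(1,5) by (cases H) auto
  then have "m * c \<le> t * a"
    using assms(1-4) by (intro mult_mono) auto
  then show ?thesis
    using t by simp
qed (use assms in simp)

lemma reaction_bounded_below:
  fixes h :: "real \<Rightarrow> ereal" and \<kappa> :: "real \<Rightarrow> real"
  assumes "continuous_on {0..} h" and "\<forall>s\<ge>0. 0 < h s" and "filterlim \<kappa> at_top at_top"
    and "0 < c"
  obtains lam0 where "0 < lam0"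
    and "\<And>lam s a b. lam0 \<le> lam \<Longrightarrow> 0 \<le> s \<Longrightarrow> c \<le> a \<Longrightarrow> \<kappa> s \<le> b \<Longrightarrow> 0 \<le> b \<Longrightarrow>
           \<bar>h s * ereal a\<bar> \<noteq> \<infinity> \<Longrightarrow> K \<le> lam * real_of_ereal (h s * ereal a) + b"
proof -
  obtain s0 where s0: "\<And>s. s0 \<le> s \<Longrightarrow> K \<le> \<kappa> s"
    using assms(3) by (auto simp: filterlim_at_top eventually_at_top_linorder)
  obtain m where "0 < m" and m: "\<forall>s\<in>{0..s0}. ereal m \<le> h s"
    using compact_continuous_pos_ereal_lower_bound[of "{0..s0}" h]
      continuous_on_subset[OF assms(1)] assms(2) by auto
  define lam0 where "lam0 = max 1 (K / (m * c))"
  have "0 < lam0"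
    by (simp add: lam0_def)
  moreover have "K \<le> lam * real_of_ereal (h s * ereal a) + b"
    if "lam0 \<le> lam" "0 \<le> s" "c \<le> a" "\<kappa> s \<le> b" "0 \<le> b" "\<bar>h s * ereal a\<bar> \<noteq> \<infinity>"
    for lam s a b
  proof (cases "s0 \<le> s")
    case True
    have "0 \<le> real_of_ereal (h s * ereal a)"
      using assms(2,4) that(2,3) by (intro real_of_ereal_pos ereal_0_le_mult) auto
    moreover have "0 \<le> lam"
      using that(1) \<open>0 < lam0\<close> by linarith
    ultimately have "0 \<le> lam * real_of_ereal (h s * ereal a)"
      by simp
    then show ?thesis
      using s0[OF True] that(4) by linarith
  next
    case False
    have "K \<le> lam0 * (m * c)"
      using \<open>0 < m\<close> assms(4) by (simp add: lam0_def pos_divide_le_eq max_def)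
    also have "\<dots> \<le> lam * real_of_ereal (h s * ereal a)"
      using real_of_ereal_mult_lower_bound[of m "h s" c a] m that \<open>0 < m\<close> assms(4) False
      by (intro mult_mono) (auto simp: lam0_def)
    finally show ?thesis
      using that(5) by linarith
  qed
  ultimately show ?thesis
    using that by blast
qed

lemma solution_tested_with_bump:
  assumes "is_solution \<Omega> \<nu> lam h f g u" and "\<Omega> \<in> lmeasurable" and "0 < r" and "cball x0 r \<subseteq> \<Omega>"
  defines "R \<equiv> \<lambda>x. lam * real_of_ereal (h (u x) * ereal (f x)) + g x (u x)"
  shows "integrable (lebesgue_on \<Omega>) (\<lambda>x. R x * bump x0 r x)"
    and "(\<integral>x. R x * bump x0 r x \<partial>lebesgue_on \<Omega>) \<le> 4 * r ^ 3 * measure lebesgue \<Omega>"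
proof -
  have \<Omega>: "\<Omega> \<in> sets lebesgue"
    using assms(2) by (rule fmeasurableD)
  obtain z where z: "AE x in lebesgue_on \<Omega>. norm (z x) \<le> 1"
    and test: "\<And>\<phi> d\<phi>. C1c_scalar \<Omega> \<phi> d\<phi> \<Longrightarrow>
      (\<integral>x. z x \<bullet> d\<phi> x \<partial>lebesgue_on \<Omega>) = (\<integral>x. R x * \<phi> x \<partial>lebesgue_on \<Omega>)"
    using assms(1) unfolding is_solution_def R_def by blast
  have L1: "L1_loc \<Omega> (\<lambda>x. real_of_ereal (h (u x) * ereal (f x)))" "L1_loc \<Omega> (\<lambda>x. g x (u x))"
    using assms(1) unfolding is_solution_def by blast+
  have "integrable (lebesgue_on \<Omega>) (\<lambda>x. F x * bump x0 r x)" if "L1_loc \<Omega> F" for F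
    by (rule L1_loc_mult_bump_integrable[OF that \<Omega>]) (use assms(3,4) in auto)
  then have "integrable (lebesgue_on \<Omega>)
      (\<lambda>x. lam * (real_of_ereal (h (u x) * ereal (f x)) * bump x0 r x) + g x (u x) * bump x0 r x)"
    using L1 by auto
  then show "integrable (lebesgue_on \<Omega>) (\<lambda>x. R x * bump x0 r x)"
    by (simp add: R_def algebra_simps)
  have "(\<integral>x. R x * bump x0 r x \<partial>lebesgue_on \<Omega>) = (\<integral>x. z x \<bullet> bump_grad x0 r x \<partial>lebesgue_on \<Omega>)"
    using test C1c_scalar_bump[OF assms(3,4)] by simp
  also have "\<dots> \<le> 4 * r ^ 3 * measure (lebesgue_on \<Omega>) (space (lebesgue_on \<Omega>))"
    using assms(3)
    by (intro integral_inner_le_measure[OF finite_measure_lebesgue_on[OF assms(2)] z] norm_bump_grad_le) simp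
  also have "\<dots> = 4 * r ^ 3 * measure lebesgue \<Omega>"
    using \<Omega> by (simp add: measure_restrict_space)
  finally show "(\<integral>x. R x * bump x0 r x \<partial>lebesgue_on \<Omega>) \<le> 4 * r ^ 3 * measure lebesgue \<Omega>" .
qed

lemma integral_bump_lower_bound:
  assumes "AE x in lebesgue_on S. x \<in> ball x0 r \<longrightarrow> K \<le> R x"
    and "integrable (lebesgue_on S) (\<lambda>x. R x * bump x0 r x)" and "S \<in> lmeasurable" and "0 \<le> r"
  shows "K * (\<integral>x. bump x0 r x \<partial>lebesgue_on S) \<le> (\<integral>x. R x * bump x0 r x \<partial>lebesgue_on S)"
proof -
  have "AE x in lebesgue_on S. K * bump x0 r x \<le> R x * bump x0 r x"
    using assms(1)
  proof (rule eventually_mono)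
    fix x assume "x \<in> ball x0 r \<longrightarrow> K \<le> R x"
    then show "K * bump x0 r x \<le> R x * bump x0 r x"
      using assms(4) bump_eq_0_iff[of r x0 x]
      by (cases "x \<in> ball x0 r") (auto intro: mult_right_mono bump_nonneg)
  qed
  then have "(\<integral>x. K * bump x0 r x \<partial>lebesgue_on S) \<le> (\<integral>x. R x * bump x0 r x \<partial>lebesgue_on S)"
    using integrable_bump[OF assms(3,4)] assms(2) by (intro integral_mono_AE) auto
  then show ?thesis
    by simp
qed

lemma solution_reaction_bounded_below_on_ball:
  assumes "is_solution \<Omega> \<nu> lam h f g u" and "\<Omega> \<in> sets lebesgue"
    and "AE x in lebesgue_on (ball x0 r). c \<le> f x"
    and "AE x in lebesgue_on (ball x0 r). \<forall>s\<ge>0. \<kappa> s \<le> g x s"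
    and "\<forall>x\<in>\<Omega>. \<forall>s\<ge>0. 0 \<le> g x s"
    and "\<And>s a b. 0 \<le> s \<Longrightarrow> c \<le> a \<Longrightarrow> \<kappa> s \<le> b \<Longrightarrow> 0 \<le> b \<Longrightarrow> \<bar>h s * ereal a\<bar> \<noteq> \<infinity> \<Longrightarrow>
           K \<le> lam * real_of_ereal (h s * ereal a) + b"
  shows "AE x in lebesgue_on \<Omega>. x \<in> ball x0 r \<longrightarrow> K \<le> lam * real_of_ereal (h (u x) * ereal (f x)) + g x (u x)"
proof -
  have "AE x in lebesgue_on \<Omega>. x \<in> \<Omega>"
    using assms(2) by (simp add: AE_restrict_space_iff)
  moreover have "AE x in lebesgue_on \<Omega>. x \<in> ball x0 r \<longrightarrow> c \<le> f x \<and> (\<forall>s\<ge>0. \<kappa> s \<le> g x s)"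
    using assms(2-4) by (intro AE_lebesgue_on_subset) auto
  moreover have "AE x in lebesgue_on \<Omega>. 0 \<le> u x" and "AE x in lebesgue_on \<Omega>. \<bar>h (u x) * ereal (f x)\<bar> \<noteq> \<infinity>"
    using assms(1) unfolding is_solution_def by blast+
  ultimately show ?thesis
  proof eventually_elim
    case (elim x)
    then show ?case
      using assms(5) by (intro impI assms(6)) auto
  qed
qed

theorem mainTheorem5:
  fixes \<Omega> :: "'a::euclidean_space set" and \<nu> :: "'a \<Rightarrow> 'a"
    and f :: "'a \<Rightarrow> real" and h :: "real \<Rightarrow> ereal" and g :: "'a \<Rightarrow> real \<Rightarrow> real"
    and \<kappa> :: "real \<Rightarrow> real" and x0 :: 'a and r c :: real
  assumes "DIM('a) \<ge> 2" and "open \<Omega>" and "bounded \<Omega>" and "lipschitz_boundary \<Omega>"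
    and "outward_normal \<Omega> \<nu>"
    and "weak_LN \<Omega> f" and "AE x in lebesgue_on \<Omega>. f x \<ge> 0"
    and "continuous_on {0..} h" and "\<forall>s\<ge>0. h s > 0"
    and "caratheodory \<Omega> g" and "\<forall>x\<in>\<Omega>. \<forall>s\<ge>0. g x s \<ge> 0"
    and "r > 0" and "cball x0 r \<subseteq> \<Omega>" and "c > 0"
    and "\<forall>s\<ge>0. \<kappa> s \<ge> 0" and "filterlim \<kappa> at_top at_top"
    and "AE x in lebesgue_on (ball x0 r). f x \<ge> c"
    and "AE x in lebesgue_on (ball x0 r). \<forall>s\<ge>0. g x s \<ge> \<kappa> s"
  shows "\<exists>lam0>0. \<forall>lam\<ge>lam0. \<not> (\<exists>u. is_solution \<Omega> \<nu> lam h f g u)"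
proof -
  have \<Omega>: "\<Omega> \<in> lmeasurable"
    using assms(2,3) by (simp add: lmeasurable_open)
  define I where "I = (\<integral>x. bump x0 r x \<partial>lebesgue_on \<Omega>)"
  have "0 < I"
    unfolding I_def using \<Omega> assms(12,13) by (intro integral_bump_pos) auto
  define K where "K = (4 * r ^ 3 * measure lebesgue \<Omega> + 1) / I"
  obtain lam0 where "0 < lam0" and reaction_large:
    "\<And>lam s a b. lam0 \<le> lam \<Longrightarrow> 0 \<le> s \<Longrightarrow> c \<le> a \<Longrightarrow> \<kappa> s \<le> b \<Longrightarrow> 0 \<le> b \<Longrightarrow>
       \<bar>h s * ereal a\<bar> \<noteq> \<infinity> \<Longrightarrow> K \<le> lam * real_of_ereal (h s * ereal a) + b"
    using reaction_bounded_below[OF assms(8,9,16,14)] by blast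
  have "\<not> is_solution \<Omega> \<nu> lam h f g u" if "lam0 \<le> lam" for lam u
  proof
    assume u: "is_solution \<Omega> \<nu> lam h f g u"
    have "K * I \<le> (\<integral>x. (lam * real_of_ereal (h (u x) * ereal (f x)) + g x (u x)) * bump x0 r x \<partial>lebesgue_on \<Omega>)"
      unfolding I_def using \<Omega> assms(12)
      by (intro integral_bump_lower_bound solution_tested_with_bump(1)[OF u \<Omega> assms(12,13)]
          solution_reaction_bounded_below_on_ball[OF u _ assms(17,18,11) reaction_large[OF that]]) auto
    also have "\<dots> \<le> 4 * r ^ 3 * measure lebesgue \<Omega>"
      by (rule solution_tested_with_bump(2)[OF u \<Omega> assms(12,13)])
    finally show False
      using \<open>0 < I\<close> by (simp add: K_def)
  qed
  then show ?thesis
    using \<open>0 < lam0\<close> by blast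
qed

end
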